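(* Let $t$ be an $\mathrm{SL}_2$-tiling and $n$ a positive integer. For each fixed $i\in\mathbb{Z}$ there are only finitely many $j\in\mathbb{Z}$ with $t_{ij}=n$, and for each fixed $j\in\mathbb{Z}$ there are only finitely many $i\in\mathbb{Z}$ with $t_{ij}=n$.
   Context: An $\mathrm{SL}_2$-tiling is a map $t:\mathbb{Z}\times\mathbb{Z}\to\{1,2,3,\dots\}$, $(i,j)\mapsto t_{ij}$, with $t_{ij}t_{i+1,j+1}-t_{i,j+1}t_{i+1,j}=1$ for all $i,j$. *)

theory Defs
  imports Main
begin

definition SL2_tiling :: "(int \<Rightarrow> int \<Rightarrow> int) \<Rightarrow> bool" where
  "SL2_tiling t \<longleftrightarrow> (\<forall>i j. t i j \<ge> 1) \<and>
     (\<forall>i j. t i j * t (i+1) (j+1) - t i (j+1) * t (i+1) j = 1)"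

end

theory Submission
  imports Defs
begin

text \<open>Two adjacent rows (or columns) of an SL2-tiling form a frieze-like pair of sequences
  whose consecutive 2x2 minors are positive; a Pluecker-type identity shows that then all
  their 2x2 minors are positive. Hence, along the positions where one row takes the value
  n, the next row increases strictly and the previous row decreases strictly. Both are
  bounded below by 1, so to the left (resp. right) of any occurrence of n there are only
  finitely many further occurrences. Columns follow by transposing the tiling.\<close>

lemma minors_pos_if_consecutive_minors_pos:
  fixes a b :: "int \<Rightarrow> 'a::linordered_idom"
  assumes b_pos: "\<And>j. b j > 0"
    and consecutive: "\<And>j. a j * b (j + 1) - a (j + 1) * b j > 0"
    and "j < k"
  shows "a j * b k - a k * b j > 0"
  using \<open>j < k\<close>
proof (induction k rule: int_gr_induct)
  case base
  show ?case using consecutive .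
next
  case (step k)
  have "b k * (a j * b (k + 1) - a (k + 1) * b j) =
      b (k + 1) * (a j * b k - a k * b j) + b j * (a k * b (k + 1) - a (k + 1) * b k)"
    by (simp add: algebra_simps)
  also have "\<dots> > 0"
    using step.IH b_pos consecutive by (simp add: add_pos_pos)
  finally show ?case
    using b_pos[of k] by (simp add: zero_less_mult_iff)
qed

lemma SL2_tiling_minor_pos:
  assumes "SL2_tiling t" and "j < k"
  shows "t i j * t (i + 1) k - t i k * t (i + 1) j > 0"
proof (rule minors_pos_if_consecutive_minors_pos[of "t (i + 1)" "t i", OF _ _ \<open>j < k\<close>])
  show "\<And>j. t (i + 1) j > 0" "\<And>j. t i j * t (i + 1) (j + 1) - t i (j + 1) * t (i + 1) j > 0"
    using \<open>SL2_tiling t\<close> unfolding SL2_tiling_def by (simp_all add: int_one_le_iff_zero_less)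
qed

lemma SL2_tiling_transpose:
  assumes "SL2_tiling t"
  shows "SL2_tiling (\<lambda>i j. t j i)"
  using assms unfolding SL2_tiling_def by (simp add: algebra_simps)

lemma finite_if_strict_mono_on_bounded:
  fixes g :: "'a::linorder \<Rightarrow> int"
  assumes "strict_mono_on S g" and "g ` S \<subseteq> {c..d}"
  shows "finite S"
  using assms strict_mono_on_imp_inj_on finite_imageD finite_subset
  by (metis finite_atLeastAtMost_int)

lemma SL2_tiling_row_level_set_finite:
  assumes t: "SL2_tiling t" and "n \<ge> 1"
  shows "finite {j. t i j = n}"
proof (cases "\<exists>j0. t i j0 = n")
  case False
  then show ?thesis by simp
next
  case True
  then obtain j0 where j0: "t i j0 = n" ..
  have pos: "\<And>i j. t i j \<ge> 1"
    using t unfolding SL2_tiling_def by blast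
  define L where "L = {j. j \<le> j0 \<and> t i j = n}"
  define R where "R = {j. j0 \<le> j \<and> t i j = n}"
  have below_incr: "strict_mono_on L (t (i + 1))"
  proof (rule strict_mono_onI)
    fix j k assume "j \<in> L" "k \<in> L" "j < k"
    then have "n * (t (i + 1) k - t (i + 1) j) > 0"
      using SL2_tiling_minor_pos[OF t, of j k i] by (simp add: L_def algebra_simps)
    then show "t (i + 1) j < t (i + 1) k"
      using \<open>n \<ge> 1\<close> by (simp add: zero_less_mult_iff)
  qed
  have above_decr: "strict_mono_on R (\<lambda>j. - t (i - 1) j)"
  proof (rule strict_mono_onI)
    fix j k assume "j \<in> R" "k \<in> R" "j < k"
    then have "n * (t (i - 1) j - t (i - 1) k) > 0"
      using SL2_tiling_minor_pos[OF t, of j k "i - 1"] by (simp add: R_def algebra_simps)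
    then show "- t (i - 1) j < - t (i - 1) k"
      using \<open>n \<ge> 1\<close> by (simp add: zero_less_mult_iff)
  qed
  have "j0 \<in> L" "j0 \<in> R"
    using j0 by (simp_all add: L_def R_def)
  have "t (i + 1) ` L \<subseteq> {1..t (i + 1) j0}"
    using pos below_incr \<open>j0 \<in> L\<close>
    by (auto simp: L_def strict_mono_on_leD)
  then have "finite L"
    using below_incr finite_if_strict_mono_on_bounded by blast
  have "(\<lambda>j. - t (i - 1) j) ` R \<subseteq> {- t (i - 1) j0..-1}"
    using pos strict_mono_on_leD[OF above_decr \<open>j0 \<in> R\<close>]
    by (auto simp: R_def)
  then have "finite R"
    using above_decr finite_if_strict_mono_on_bounded by blast
  have "{j. t i j = n} = L \<union> R"
    by (auto simp: L_def R_def)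
  then show ?thesis
    using \<open>finite L\<close> \<open>finite R\<close> by simp
qed

theorem proposition6p1:
  fixes t :: "int \<Rightarrow> int \<Rightarrow> int" and n :: int
  assumes "SL2_tiling t" and "n \<ge> 1"
  shows "(\<forall>i. finite {j. t i j = n}) \<and> (\<forall>j. finite {i. t i j = n})"
  using SL2_tiling_row_level_set_finite[OF assms]
    SL2_tiling_row_level_set_finite[OF SL2_tiling_transpose[OF assms(1)] assms(2)]
  by blast

end
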